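(* Let $d<\infty$ and let $V\subset\mathbb{B}_d$ be an analytic disc attached to the unit sphere. Then $V$ is irreducible: for every regular point $\lambda\in V$ and every $\varepsilon>0$, the common zero set in $\mathbb{B}_d$ of all $\varphi\in\mathcal{M}_d$ that vanish on $V\cap B_\varepsilon(\lambda)$ is exactly $V$.
   Context: $\mathbb{D}$ is the open unit disc, $\mathbb{B}_d$ the open unit ball of $\mathbb{C}^d$, $B_\varepsilon(\lambda)$ the open ball of radius $\varepsilon$ about $\lambda$. The Drury–Arveson space $H^2_d$ is the RKHS on $\mathbb{B}_d$ with kernel $1/(1-\langle z,w\rangle)$, with multiplier algebra $\mathcal{M}_d$. A variety is a common zero set in $\mathbb{B}_d$ of a family of functions from $\mathcal{M}_d$. An analytic disc attached to the unit sphere is a variety $V\subset\mathbb{B}_d$ ($d<\infty$) for which there is an injective analytic $f:\mathbb{D}\to\mathbb{B}_d$ with $f'(z)\neq0$ on $\mathbb{D}$, $V=f(\mathbb{D})$, $f$ extends to a $C^2$ map on $\overline{\mathbb{D}}$, and for $x\in\overline{\mathbb{D}}$, $\|f(x)\|=1$ iff $|x|=1$. *)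

theory Defs
  imports "HOL-Analysis.Analysis"
begin

text \<open>Points of C^d are vectors of type complex^'n ('n a finite type, d = CARD('n)).
  The norm on complex^'n is the Euclidean norm, so ball 0 1 is the open unit ball B_d.\<close>

definition cinner :: "complex^'n \<Rightarrow> complex^'n \<Rightarrow> complex" where
  "cinner z w = (\<Sum>i\<in>UNIV. z $ i * cnj (w $ i))"

definition DA_kernel :: "complex^'n \<Rightarrow> complex^'n \<Rightarrow> complex" where
  "DA_kernel z w = 1 / (1 - cinner z w)"

definition pos_kernel :: "'a set \<Rightarrow> ('a \<Rightarrow> 'a \<Rightarrow> complex) \<Rightarrow> bool" where
  "pos_kernel S L \<longleftrightarrow>
     (\<forall>(n::nat) (x::nat \<Rightarrow> 'a) (a::nat \<Rightarrow> complex). (\<forall>i<n. x i \<in> S) \<longrightarrow>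
        (let s = (\<Sum>i<n. \<Sum>j<n. a i * cnj (a j) * L (x i) (x j)) in Im s = 0 \<and> Re s \<ge> 0))"

text \<open>Drury--Arveson space: the reproducing kernel Hilbert space of DA_kernel on the ball,
  given by its membership criterion (Aronszajn): f \<in> H(K) iff c K - f \<otimes> f^* is a
  positive kernel for some constant c.\<close>
definition DA_space :: "(complex^'n \<Rightarrow> complex) set" where
  "DA_space = {f. \<exists>c::real. pos_kernel (ball 0 1)
        (\<lambda>z w. of_real c * DA_kernel z w - f z * cnj (f w))}"

definition DA_mult :: "(complex^'n \<Rightarrow> complex) set" where
  "DA_mult = {\<phi>. \<forall>f\<in>DA_space. (\<lambda>z. \<phi> z * f z) \<in> DA_space}"

definition zero_set :: "(complex^'n \<Rightarrow> complex) set \<Rightarrow> (complex^'n) set" where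
  "zero_set F = {z \<in> ball 0 1. \<forall>\<phi>\<in>F. \<phi> z = 0}"

definition variety :: "(complex^'n) set \<Rightarrow> bool" where
  "variety V \<longleftrightarrow> (\<exists>F \<subseteq> DA_mult. V = zero_set F)"

definition cholo_on :: "(complex^'n) set \<Rightarrow> (complex^'n \<Rightarrow> complex^'m) \<Rightarrow> bool" where
  "cholo_on U \<Phi> \<longleftrightarrow> (\<forall>z\<in>U. \<exists>D. (\<Phi> has_derivative D) (at z) \<and>
                        (\<forall>c v. D (c *s v) = c *s D v))"

definition biholo_on :: "(complex^'n) set \<Rightarrow> (complex^'n \<Rightarrow> complex^'n) \<Rightarrow> bool" where
  "biholo_on U \<Phi> \<longleftrightarrow> open U \<and> inj_on \<Phi> U \<and> open (\<Phi> ` U) \<and> cholo_on U \<Phi> \<and>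
                      cholo_on (\<Phi> ` U) (inv_into U \<Phi>)"

text \<open>Regular point of V: near \<lambda>, V is a complex submanifold (given by a holomorphic
  slice chart).\<close>
definition regular_point :: "(complex^'n) set \<Rightarrow> complex^'n \<Rightarrow> bool" where
  "regular_point V p \<longleftrightarrow> p \<in> V \<and>
     (\<exists>U \<Phi> (S::'n set). p \<in> U \<and> biholo_on U \<Phi> \<and>
        \<Phi> ` (V \<inter> U) = \<Phi> ` U \<inter> {z. \<forall>i. i \<notin> S \<longrightarrow> z $ i = 0})"

definition C2_on_cdisc :: "(complex \<Rightarrow> complex^'n) \<Rightarrow> bool" where
  "C2_on_cdisc F \<longleftrightarrow>
     (\<exists>(DF :: complex \<Rightarrow> complex \<Rightarrow>\<^sub>L (complex^'n))
        (DDF :: complex \<Rightarrow> complex \<Rightarrow>\<^sub>L (complex \<Rightarrow>\<^sub>L (complex^'n))).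
        (\<forall>x\<in>cball 0 1. (F has_derivative blinfun_apply (DF x)) (at x within cball 0 1) \<and>
                         (DF has_derivative blinfun_apply (DDF x)) (at x within cball 0 1)) \<and>
        continuous_on (cball 0 1) DDF)"

definition analytic_disc_attached :: "(complex^'n) set \<Rightarrow> bool" where
  "analytic_disc_attached V \<longleftrightarrow> variety V \<and>
     (\<exists>f :: complex \<Rightarrow> complex^'n.
        f ` ball 0 1 \<subseteq> ball 0 1 \<and>
        (\<forall>i. (\<lambda>z. f z $ i) holomorphic_on ball 0 1) \<and>
        inj_on f (ball 0 1) \<and>
        (\<forall>z\<in>ball 0 1. \<exists>i. deriv (\<lambda>w. f w $ i) z \<noteq> 0) \<and>
        V = f ` ball 0 1 \<and>
        (\<exists>F. (\<forall>z\<in>ball 0 1. F z = f z) \<and> C2_on_cdisc F \<and>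
             (\<forall>x\<in>cball 0 1. norm (F x) = 1 \<longleftrightarrow> norm x = 1)))"

end

(*
  Every multiplier lies in the Drury-Arveson space (it is the multiplier applied to the constant 1),
  and a function phi of that space satisfies |sum a_i phi(x_i)|^2 <= c sum a_i conj(a_j) K(x_i, x_j).
  Along a holomorphic disc f the kernel K(f s, f t) has a mixed second derivative on the diagonal,
  so testing the inequality at f(z+h), f(z), f(z+h'), f(z) shows that the difference quotients of
  phi o f are Cauchy: phi o f is holomorphic. If phi vanishes on V near p = f(s0), then phi o f
  vanishes near s0, hence on the whole disc by the identity theorem, i.e. phi vanishes on V.
  The reverse inclusion holds because V is a variety: its defining multipliers vanish on V.
*)

theory Submission
  imports Defs "HOL-Complex_Analysis.Complex_Analysis"
begin

lemma cinner_add_left: "cinner (x + y) z = cinner x z + cinner y z"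
  by (simp add: cinner_def distrib_right sum.distrib)

lemma cinner_add_right: "cinner x (y + z) = cinner x y + cinner x z"
  by (simp add: cinner_def distrib_left sum.distrib)

lemma cinner_scale_left: "cinner (c *s x) y = c * cinner x y"
  by (simp add: cinner_def sum_distrib_left mult.assoc)

lemma cinner_scale_right: "cinner x (c *s y) = cnj c * cinner x y"
  by (simp add: cinner_def sum_distrib_left mult_ac)

lemma tendsto_cinner [tendsto_intros]:
  "(f \<longlongrightarrow> a) F \<Longrightarrow> (g \<longlongrightarrow> b) F \<Longrightarrow> ((\<lambda>x. cinner (f x) (g x)) \<longlongrightarrow> cinner a b) F"
  unfolding cinner_def by (intro tendsto_intros)

lemma norm_cinner_le: "norm (cinner x y) \<le> norm x * norm y"
proof -
  have "norm (cinner x y) \<le> (\<Sum>i\<in>UNIV. norm (x $ i) * norm (y $ i))"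
    unfolding cinner_def by (rule order_trans[OF norm_sum]) (simp add: norm_mult)
  also have "\<dots> \<le> L2_set (\<lambda>i. norm (x $ i)) UNIV * L2_set (\<lambda>i. norm (y $ i)) UNIV"
    using L2_set_mult_ineq[of "\<lambda>i. norm (x $ i)" "\<lambda>i. norm (y $ i)" UNIV] by simp
  finally show ?thesis by (simp add: norm_vec_def)
qed

lemma norm_cinner_less_1:
  assumes "x \<in> ball 0 1" "y \<in> ball 0 1"
  shows "norm (cinner x y) < 1"
proof -
  have "norm x * norm y \<le> norm x" "norm x < 1"
    using assms by (simp_all add: mult_left_le)
  with norm_cinner_le[of x y] show ?thesis by linarith
qed

lemma pos_kernel_cinner_power: "pos_kernel S (\<lambda>z w. cinner z w ^ n)"
proof -
  have "Im (\<Sum>i<m. \<Sum>j<m. a i * cnj (a j) * cinner (x i) (x j) ^ n) = 0 \<and>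
        0 \<le> Re (\<Sum>i<m. \<Sum>j<m. a i * cnj (a j) * cinner (x i) (x j) ^ n)"
    for m and x :: "nat \<Rightarrow> complex^'n" and a
  proof (induction n arbitrary: a)
    case 0
    have "(\<Sum>i<m. \<Sum>j<m. a i * cnj (a j) * cinner (x i) (x j) ^ 0) = (\<Sum>i<m. a i) * cnj (\<Sum>j<m. a j)"
      by (simp add: sum_distrib_left sum_distrib_right) (rule sum.swap)
    also have "\<dots> = of_real ((Re (\<Sum>i<m. a i))\<^sup>2 + (Im (\<Sum>i<m. a i))\<^sup>2)"
      by (rule complex_mult_cnj)
    finally show ?case by simp
  next
    case (Suc n)
    \<comment> \<open>Schur product: the kernel of power n+1 is a sum over k of kernels of power n,
      taken with the weights a i * x i $ k.\<close>
    have "(\<Sum>i<m. \<Sum>j<m. a i * cnj (a j) * cinner (x i) (x j) ^ Suc n)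
        = (\<Sum>i<m. \<Sum>j<m. \<Sum>k\<in>UNIV. (a i * x i $ k) * cnj (a j * x j $ k) * cinner (x i) (x j) ^ n)"
      by (simp add: cinner_def sum_distrib_left sum_distrib_right mult_ac)
    also have "\<dots> = (\<Sum>k\<in>UNIV. \<Sum>i<m. \<Sum>j<m. (a i * x i $ k) * cnj (a j * x j $ k) * cinner (x i) (x j) ^ n)"
      by (subst sum.swap) (simp add: sum.swap[of _ "{..<m}" UNIV])
    finally show ?case
      using Suc.IH[of "\<lambda>i. a i * x i $ k" for k] by (simp add: Im_sum Re_sum sum_nonneg)
  qed
  then show ?thesis
    unfolding pos_kernel_def Let_def by blast
qed

lemma pos_kernel_sums:
  assumes "\<And>n. pos_kernel S (L n)"
    and "\<And>z w. z \<in> S \<Longrightarrow> w \<in> S \<Longrightarrow> (\<lambda>n. L n z w) sums M z w"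
  shows "pos_kernel S M"
  unfolding pos_kernel_def Let_def
proof (intro allI impI)
  fix m :: nat and x :: "nat \<Rightarrow> 'a" and a :: "nat \<Rightarrow> complex"
  assume x: "\<forall>i<m. x i \<in> S"
  define s where "s n = (\<Sum>i<m. \<Sum>j<m. a i * cnj (a j) * L n (x i) (x j))" for n
  have s: "s sums (\<Sum>i<m. \<Sum>j<m. a i * cnj (a j) * M (x i) (x j))"
    unfolding s_def using x by (intro sums_sum sums_mult assms(2)) auto
  have "Im (s n) = 0" "0 \<le> Re (s n)" for n
    using assms(1)[of n] x unfolding pos_kernel_def Let_def s_def by auto
  then show "Im (\<Sum>i<m. \<Sum>j<m. a i * cnj (a j) * M (x i) (x j)) = 0 \<and>
        0 \<le> Re (\<Sum>i<m. \<Sum>j<m. a i * cnj (a j) * M (x i) (x j))"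
    using sums_unique2[OF sums_Im[OF s]] sums_le[OF _ sums_zero sums_Re[OF s]] by simp
qed

lemma one_in_DA_space: "(\<lambda>_. 1) \<in> DA_space"
proof -
  have "pos_kernel (ball 0 1) (\<lambda>z w. of_real 1 * DA_kernel z w - 1 * cnj 1)"
  proof (rule pos_kernel_sums[where L = "\<lambda>n z w. cinner z w ^ Suc n"])
    show "pos_kernel (ball 0 1) (\<lambda>z w. cinner z w ^ Suc n)" for n
      by (rule pos_kernel_cinner_power)
    fix z w :: "complex^'n"
    assume "z \<in> ball 0 1" "w \<in> ball 0 1"
    then have "(\<lambda>n. cinner z w ^ n) sums (1 / (1 - cinner z w))"
      using geometric_sums norm_cinner_less_1 by blast
    then show "(\<lambda>n. cinner z w ^ Suc n) sums (of_real 1 * DA_kernel z w - 1 * cnj 1)"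
      using sums_Suc_iff[of "\<lambda>n. cinner z w ^ n" "1 / (1 - cinner z w) - 1"]
      by (simp add: DA_kernel_def)
  qed
  then show ?thesis
    unfolding DA_space_def by blast
qed

lemma DA_mult_subset_DA_space: "DA_mult \<subseteq> DA_space"
  using one_in_DA_space unfolding DA_mult_def by fastforce

lemma pos_kernel_rank_one_bound:
  fixes m :: nat
  assumes "pos_kernel S (\<lambda>z w. of_real c * K z w - \<phi> z * cnj (\<phi> w))" "\<forall>i<m. x i \<in> S"
  shows "(cmod (\<Sum>i<m. a i * \<phi> (x i)))\<^sup>2 \<le> c * Re (\<Sum>i<m. \<Sum>j<m. a i * cnj (a j) * K (x i) (x j))"
proof -
  let ?S = "\<Sum>i<m. a i * \<phi> (x i)"
  let ?Q = "\<Sum>i<m. \<Sum>j<m. a i * cnj (a j) * K (x i) (x j)"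
  have "?S * cnj ?S = (\<Sum>i<m. \<Sum>j<m. a i * cnj (a j) * (\<phi> (x i) * cnj (\<phi> (x j))))"
    by (simp only: cnj_sum sum_product) (simp add: mult_ac)
  then have expand: "(\<Sum>i<m. \<Sum>j<m. a i * cnj (a j) * (of_real c * K (x i) (x j) - \<phi> (x i) * cnj (\<phi> (x j))))
     = of_real c * ?Q - ?S * cnj ?S"
    by (simp add: right_diff_distrib sum_subtractf sum_distrib_left mult_ac)
  have "0 \<le> Re (\<Sum>i<m. \<Sum>j<m. a i * cnj (a j) * (of_real c * K (x i) (x j) - \<phi> (x i) * cnj (\<phi> (x j))))"
    using assms unfolding pos_kernel_def Let_def by blast
  then have "0 \<le> Re (of_real c * ?Q - ?S * cnj ?S)"
    unfolding expand .
  moreover have "Re (?S * cnj ?S) = (cmod ?S)\<^sup>2"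
    by (simp only: complex_mult_cnj cmod_power2) simp
  ultimately show ?thesis by simp
qed

lemma tendsto_exists_of_Cauchy_differences:
  fixes D :: "'a \<Rightarrow> 'b::banach"
  assumes "((\<lambda>x. D (fst x) - D (snd x)) \<longlongrightarrow> 0) (F \<times>\<^sub>F F)"
  shows "\<exists>l. (D \<longlongrightarrow> l) F"
proof -
  have "cauchy_filter (filtermap D F)"
    unfolding cauchy_filter_metric_filtermap
  proof (intro allI impI)
    fix e :: real
    assume "e > 0"
    with tendstoD[OF assms] have "eventually (\<lambda>x. dist (D (fst x)) (D (snd x)) < e) (F \<times>\<^sub>F F)"
      by (simp add: dist_norm)
    then show "\<exists>P. eventually P F \<and> (\<forall>x y. P x \<and> P y \<longrightarrow> dist (D x) (D y) < e)"
      unfolding eventually_prod_same by auto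
  qed
  then show ?thesis
    using cauchy_filter_convergent by (auto simp: convergent_filter_iff filterlim_def)
qed

lemma field_differentiable_of_kernel_bound:
  fixes g :: "complex \<Rightarrow> complex" and L :: "complex \<Rightarrow> complex \<Rightarrow> complex"
  assumes bound: "\<And>(m::nat) x a. (\<forall>i<m. x i \<in> S) \<Longrightarrow>
      (cmod (\<Sum>i<m. a i * g (x i)))\<^sup>2 \<le> c * Re (\<Sum>i<m. \<Sum>j<m. a i * cnj (a j) * L (x i) (x j))"
    and "open S" "z \<in> S"
    and lim: "((\<lambda>(h, k). (L (z + h) (z + k) - L (z + h) z - L z (z + k) + L z z) / (h * cnj k))
               \<longlongrightarrow> A0) (at 0 \<times>\<^sub>F at 0)"
  shows "g field_differentiable at z"
proof -
  let ?F = "at (0::complex) \<times>\<^sub>F at 0"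
  define D where "D h = (g (z + h) - g z) / h" for h
  define A where "A h k = (L (z + h) (z + k) - L (z + h) z - L z (z + k) + L z z) / (h * cnj k)" for h k
  define Q where "Q x = A (fst x) (fst x) - A (fst x) (snd x) - A (snd x) (fst x) + A (snd x) (snd x)"
    for x :: "complex \<times> complex"
  have A: "((\<lambda>x. A (a x) (b x)) \<longlongrightarrow> A0) ?F"
    if "filterlim a (at 0) ?F" "filterlim b (at 0) ?F" for a b
    using filterlim_compose[OF lim filterlim_Pair[OF that]] by (simp add: A_def)
  have "(Q \<longlongrightarrow> A0 - A0 - A0 + A0) ?F"
    unfolding Q_def by (intro tendsto_intros A filterlim_fst filterlim_snd)
  then have Q: "((\<lambda>x. c * Re (Q x)) \<longlongrightarrow> 0) ?F"
    by (auto intro!: tendsto_eq_intros)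
  have "eventually (\<lambda>h. h \<noteq> 0 \<and> z + h \<in> S) (at 0)"
  proof -
    have "((\<lambda>h. z + h) \<longlongrightarrow> z) (at 0)"
      by (auto intro!: tendsto_eq_intros)
    from topological_tendstoD[OF this \<open>open S\<close> \<open>z \<in> S\<close>] eventually_neq_at_within[of 0 0]
    show ?thesis by eventually_elim simp
  qed
  then have D_Q: "eventually (\<lambda>x. (cmod (D (fst x) - D (snd x)))\<^sup>2 \<le> c * Re (Q x)) ?F"
    unfolding eventually_prod_filter
  proof (intro exI conjI allI impI)
    fix h h' :: complex
    assume h: "h \<noteq> 0 \<and> z + h \<in> S" and h': "h' \<noteq> 0 \<and> z + h' \<in> S"
    \<comment> \<open>These weights and points turn the bound into one on D h - D h'.\<close>
    define a where "a = (!) [1 / h, - 1 / h, - 1 / h', 1 / h']"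
    define x where "x = (!) [z + h, z, z + h', z]"
    have four: "{..<4::nat} = {0, 1, 2, 3}"
      by auto
    have "\<forall>i\<in>{..<4}. x i \<in> S"
      unfolding four using h h' \<open>z \<in> S\<close> by (simp add: x_def)
    then have "(cmod (\<Sum>i<4. a i * g (x i)))\<^sup>2 \<le> c * Re (\<Sum>i<4. \<Sum>j<4. a i * cnj (a j) * L (x i) (x j))"
      by (intro bound) simp
    moreover have "(\<Sum>i<4. a i * g (x i)) = D h - D h'"
      unfolding four by (simp add: a_def x_def D_def diff_divide_distrib)
    moreover have "(\<Sum>i<4. \<Sum>j<4. a i * cnj (a j) * L (x i) (x j)) = Q (h, h')"
      unfolding four by (simp add: a_def x_def Q_def A_def divide_inverse algebra_simps)
    ultimately show "(cmod (D (fst (h, h')) - D (snd (h, h'))))\<^sup>2 \<le> c * Re (Q (h, h'))"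
      by simp
  qed
  have "((\<lambda>x. (cmod (D (fst x) - D (snd x)))\<^sup>2) \<longlongrightarrow> 0) ?F"
    by (rule tendsto_sandwich[OF always_eventually D_Q tendsto_const Q]) simp
  from tendsto_real_sqrt[OF this] have "((\<lambda>x. cmod (D (fst x) - D (snd x))) \<longlongrightarrow> 0) ?F"
    by simp
  then have "((\<lambda>x. D (fst x) - D (snd x)) \<longlongrightarrow> 0) ?F"
    by (rule tendsto_norm_zero_cancel)
  then obtain l where "(D \<longlongrightarrow> l) (at 0)"
    using tendsto_exists_of_Cauchy_differences by blast
  then show ?thesis
    unfolding field_differentiable_def DERIV_def D_def by blast
qed

lemma inverse_one_minus_second_difference:
  fixes W a b t h k :: complex
  assumes X: "X = W + k * a + h * b + h * k * t" and Y: "Y = W + h * b" and Z: "Z = W + k * a"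
  assumes "h \<noteq> 0" "k \<noteq> 0" "X \<noteq> 1" "Y \<noteq> 1" "Z \<noteq> 1" "W \<noteq> 1"
  shows "(1 / (1 - X) - 1 / (1 - Y) - 1 / (1 - Z) + 1 / (1 - W)) / (h * k)
       = t / ((1 - X) * (1 - Y)) + a * ((b + k * t) * (1 - Y) + b * (1 - Z)) / ((1 - X) * (1 - Y) * (1 - Z) * (1 - W))"
proof -
  have nz: "1 - X \<noteq> 0" "1 - Y \<noteq> 0" "1 - Z \<noteq> 0" "1 - W \<noteq> 0" using assms by auto
  have "(1 - Z) * (1 - W) - (1 - X) * (1 - Y) = h * ((b + k * t) * (1 - Y) + b * (1 - Z))"
    unfolding X Y Z by algebra
  moreover have "(1 - Y) - (1 - X) = k * (a + h * t)" "(1 - W) - (1 - Z) = k * a"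
    unfolding X Y Z by algebra+
  ultimately show ?thesis using nz \<open>h \<noteq> 0\<close> \<open>k \<noteq> 0\<close>
    by (simp add: divide_simps) algebra
qed

lemma DA_kernel_second_difference:
  assumes "u = w + h *s p" "v = w + k *s q" "h \<noteq> 0" "k \<noteq> 0"
    and "cinner u v \<noteq> 1" "cinner u w \<noteq> 1" "cinner w v \<noteq> 1" "cinner w w \<noteq> 1"
  shows "(DA_kernel u v - DA_kernel u w - DA_kernel w v + DA_kernel w w) / (h * cnj k)
       = cinner p q / ((1 - cinner u v) * (1 - cinner u w))
         + cinner w q * (cinner p v * (1 - cinner u w) + cinner p w * (1 - cinner w v))
           / ((1 - cinner u v) * (1 - cinner u w) * (1 - cinner w v) * (1 - cinner w w))"
proof -
  have "cinner p v = cinner p w + cnj k * cinner p q"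
    using assms(2) by (simp add: cinner_add_right cinner_scale_right)
  moreover have "cinner u v = cinner w w + cnj k * cinner w q + h * cinner p w + h * cnj k * cinner p q"
    "cinner u w = cinner w w + h * cinner p w" "cinner w v = cinner w w + cnj k * cinner w q"
    using assms(1,2) by (simp_all add: cinner_add_left cinner_add_right cinner_scale_left
        cinner_scale_right algebra_simps)
  ultimately show ?thesis
    using inverse_one_minus_second_difference[of "cinner u v" "cinner w w" "cnj k" "cinner w q"
        h "cinner p w" "cinner p q" "cinner u w" "cinner w v"] assms(3-)
    by (simp add: DA_kernel_def)
qed

lemma vec_has_field_derivative_tendsto:
  fixes f :: "complex \<Rightarrow> complex^'n"
  assumes "\<And>i. ((\<lambda>s. f s $ i) has_field_derivative f' $ i) (at z)"
  shows "((\<lambda>h. f (z + h)) \<longlongrightarrow> f z) (at 0)"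
    and "((\<lambda>h. (1 / h) *s (f (z + h) - f z)) \<longlongrightarrow> f') (at 0)"
proof -
  show "((\<lambda>h. f (z + h)) \<longlongrightarrow> f z) (at 0)"
  proof (rule vec_tendstoI)
    fix i
    show "((\<lambda>h. f (z + h) $ i) \<longlongrightarrow> f z $ i) (at 0)"
      using DERIV_isCont[OF assms[of i]] by (simp add: isCont_iff)
  qed
  show "((\<lambda>h. (1 / h) *s (f (z + h) - f z)) \<longlongrightarrow> f') (at 0)"
  proof (rule vec_tendstoI)
    fix i
    show "((\<lambda>h. ((1 / h) *s (f (z + h) - f z)) $ i) \<longlongrightarrow> f' $ i) (at 0)"
      using assms[of i] by (simp add: DERIV_def diff_divide_distrib)
  qed
qed

text \<open>The limit is the mixed derivative of K(f s, f t) at s = t = z.\<close>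

lemma DA_kernel_mixed_quotient_tendsto:
  fixes f :: "complex \<Rightarrow> complex^'n"
  assumes deriv: "\<And>i. ((\<lambda>s. f s $ i) has_field_derivative f' $ i) (at z)"
    and "f z \<in> ball 0 1"
  defines "W \<equiv> cinner (f z) (f z)"
  shows "((\<lambda>(h, k). (DA_kernel (f (z + h)) (f (z + k)) - DA_kernel (f (z + h)) (f z)
                      - DA_kernel (f z) (f (z + k)) + DA_kernel (f z) (f z)) / (h * cnj k))
          \<longlongrightarrow> cinner f' f' / (1 - W)\<^sup>2 + 2 * cinner (f z) f' * cinner f' (f z) / (1 - W) ^ 3)
         (at 0 \<times>\<^sub>F at 0)"
proof -
  let ?F = "at (0::complex) \<times>\<^sub>F at 0"
  define w where "w = f z"
  define u where "u x = f (z + fst x)" for x :: "complex \<times> complex"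
  define v where "v x = f (z + snd x)" for x :: "complex \<times> complex"
  define p where "p x = (1 / fst x) *s (f (z + fst x) - w)" for x :: "complex \<times> complex"
  define q where "q x = (1 / snd x) *s (f (z + snd x) - w)" for x :: "complex \<times> complex"
  define E where "E x = cinner (p x) (q x) / ((1 - cinner (u x) (v x)) * (1 - cinner (u x) w))
         + cinner w (q x) * (cinner (p x) (v x) * (1 - cinner (u x) w) + cinner (p x) w * (1 - cinner w (v x)))
           / ((1 - cinner (u x) (v x)) * (1 - cinner (u x) w) * (1 - cinner w (v x)) * (1 - W))" for x
  have W: "1 - W \<noteq> 0"
    using norm_cinner_less_1[OF assms(2) assms(2)] by (auto simp: W_def)
  note lim = vec_has_field_derivative_tendsto[OF deriv]
  have "(u \<longlongrightarrow> w) ?F" "(v \<longlongrightarrow> w) ?F" "(p \<longlongrightarrow> f') ?F" "(q \<longlongrightarrow> f') ?F"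
    unfolding u_def v_def p_def q_def w_def
    by (rule filterlim_compose[OF lim(1) filterlim_fst] filterlim_compose[OF lim(1) filterlim_snd]
        filterlim_compose[OF lim(2) filterlim_fst] filterlim_compose[OF lim(2) filterlim_snd])+
  then have "(E \<longlongrightarrow> cinner f' f' / ((1 - W) * (1 - W))
      + cinner w f' * (cinner f' w * (1 - W) + cinner f' w * (1 - W)) / ((1 - W) * (1 - W) * (1 - W) * (1 - W))) ?F"
    unfolding E_def W_def using W[unfolded W_def] by (intro tendsto_intros) (auto simp: w_def)
  moreover have "cinner f' f' / ((1 - W) * (1 - W))
      + cinner w f' * (cinner f' w * (1 - W) + cinner f' w * (1 - W)) / ((1 - W) * (1 - W) * (1 - W) * (1 - W))
      = cinner f' f' / (1 - W)\<^sup>2 + 2 * cinner (f z) f' * cinner f' (f z) / (1 - W) ^ 3"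
    using W by (simp add: w_def divide_simps power2_eq_square power3_eq_cube)
  moreover have "eventually (\<lambda>h. h \<noteq> 0 \<and> f (z + h) \<in> ball 0 1) (at 0)"
    using eventually_neq_at_within[of 0 0] topological_tendstoD[OF lim(1) open_ball assms(2)]
    by eventually_elim simp
  then have "eventually (\<lambda>x. E x = (\<lambda>(h, k). (DA_kernel (f (z + h)) (f (z + k)) - DA_kernel (f (z + h)) (f z)
                      - DA_kernel (f z) (f (z + k)) + DA_kernel (f z) (f z)) / (h * cnj k)) x) ?F"
    unfolding eventually_prod_filter
  proof (intro exI conjI allI impI)
    fix h k
    assume h: "h \<noteq> 0 \<and> f (z + h) \<in> ball 0 1" and k: "k \<noteq> 0 \<and> f (z + k) \<in> ball 0 1"
    have "cinner (f (z + h)) (f (z + k)) \<noteq> 1" "cinner (f (z + h)) w \<noteq> 1"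
      "cinner w (f (z + k)) \<noteq> 1" "cinner w w \<noteq> 1"
      using norm_cinner_less_1 h k assms(2) unfolding w_def by (metis norm_one order.irrefl)+
    moreover have "f (z + h) = w + h *s ((1 / h) *s (f (z + h) - w))"
      "f (z + k) = w + k *s ((1 / k) *s (f (z + k) - w))"
      using h k by (simp_all add: vector_smult_assoc)
    ultimately have "(DA_kernel (f (z + h)) (f (z + k)) - DA_kernel (f (z + h)) w
        - DA_kernel w (f (z + k)) + DA_kernel w w) / (h * cnj k) = E (h, k)"
      unfolding E_def u_def v_def p_def q_def W_def w_def[symmetric] fst_conv snd_conv
      using h k by (intro DA_kernel_second_difference) auto
    then show "E (h, k) = (\<lambda>(h, k). (DA_kernel (f (z + h)) (f (z + k)) - DA_kernel (f (z + h)) (f z)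
                      - DA_kernel (f z) (f (z + k)) + DA_kernel (f z) (f z)) / (h * cnj k)) (h, k)"
      by (simp add: w_def)
  qed
  ultimately show ?thesis
    using Lim_transform_eventually by fastforce
qed

lemma DA_space_comp_holomorphic:
  fixes f :: "complex \<Rightarrow> complex^'n"
  assumes "\<phi> \<in> DA_space" and hol: "\<And>i. (\<lambda>s. f s $ i) holomorphic_on S"
    and "open S" and into: "f ` S \<subseteq> ball 0 1"
  shows "(\<lambda>s. \<phi> (f s)) holomorphic_on S"
  unfolding holomorphic_on_def
proof
  fix z
  assume "z \<in> S"
  obtain c :: real where c: "pos_kernel (ball 0 1) (\<lambda>z w. of_real c * DA_kernel z w - \<phi> z * cnj (\<phi> w))"
    using \<open>\<phi> \<in> DA_space\<close> unfolding DA_space_def by blast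
  have deriv: "((\<lambda>s. f s $ i) has_field_derivative (\<chi> i. deriv (\<lambda>s. f s $ i) z) $ i) (at z)" for i
    using holomorphic_on_imp_differentiable_at[OF hol \<open>open S\<close> \<open>z \<in> S\<close>]
    by (simp add: field_differentiable_derivI)
  have "f z \<in> ball 0 1"
    using into \<open>z \<in> S\<close> by blast
  note lim = DA_kernel_mixed_quotient_tendsto[OF deriv this]
  have "(cmod (\<Sum>i<m. a i * \<phi> (f (x i))))\<^sup>2
      \<le> c * Re (\<Sum>i<m. \<Sum>j<m. a i * cnj (a j) * DA_kernel (f (x i)) (f (x j)))"
    if "\<forall>i<m. x i \<in> S" for m :: nat and x a
    using that into by (intro pos_kernel_rank_one_bound[OF c]) blast
  then have "(\<lambda>s. \<phi> (f s)) field_differentiable at z"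
    by (rule field_differentiable_of_kernel_bound[where L = "\<lambda>s t. DA_kernel (f s) (f t)", OF _ \<open>open S\<close> \<open>z \<in> S\<close> lim])
  then show "(\<lambda>s. \<phi> (f s)) field_differentiable at z within S"
    by (rule field_differentiable_at_within)
qed

lemma DA_space_vanishes_on_image_of_vanishing_near_point:
  fixes f :: "complex \<Rightarrow> complex^'n"
  assumes "\<phi> \<in> DA_space" and hol: "\<And>i. (\<lambda>s. f s $ i) holomorphic_on S"
    and "open S" "connected S" and into: "f ` S \<subseteq> ball 0 1"
    and "s0 \<in> S" "\<epsilon> > 0" and vanish: "\<forall>w \<in> f ` S \<inter> ball (f s0) \<epsilon>. \<phi> w = 0"
  shows "\<forall>w \<in> f ` S. \<phi> w = 0"
proof -
  have "continuous_on S f"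
    using continuous_on_vec_lambda[of S "\<lambda>i s. f s $ i"] hol holomorphic_on_imp_continuous_on by auto
  then have U: "open (S \<inter> f -` ball (f s0) \<epsilon>)"
    using \<open>open S\<close> by (rule continuous_open_preimage) simp
  have "\<phi> (f s) = 0" if "s \<in> S" for s
  proof (rule analytic_continuation_open[where f = "\<lambda>s. \<phi> (f s)" and g = "\<lambda>_. 0", OF U \<open>open S\<close>])
    show "S \<inter> f -` ball (f s0) \<epsilon> \<subseteq> S"
      by blast
    show "(\<lambda>s. \<phi> (f s)) holomorphic_on S"
      by (rule DA_space_comp_holomorphic[OF \<open>\<phi> \<in> DA_space\<close> hol \<open>open S\<close> into])
    show "\<phi> (f z) = 0" if "z \<in> S \<inter> f -` ball (f s0) \<epsilon>" for z
      using vanish that by blast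
  qed (use \<open>s0 \<in> S\<close> \<open>\<epsilon> > 0\<close> \<open>connected S\<close> \<open>s \<in> S\<close> in auto)
  then show ?thesis by blast
qed

theorem lemma2p5:
  fixes V :: "(complex^'n) set"
  assumes "analytic_disc_attached V"
  shows "\<forall>p \<epsilon>. regular_point V p \<and> \<epsilon> > 0 \<longrightarrow>
           zero_set {\<phi> \<in> DA_mult. \<forall>w \<in> V \<inter> ball p \<epsilon>. \<phi> w = 0} = V"
proof (intro allI impI)
  fix p :: "complex^'n" and \<epsilon> :: real
  assume "regular_point V p \<and> \<epsilon> > 0"
  then have "p \<in> V" "\<epsilon> > 0"
    unfolding regular_point_def by auto
  obtain F where F: "F \<subseteq> DA_mult" "V = zero_set F"
    using assms unfolding analytic_disc_attached_def variety_def by blast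
  obtain f :: "complex \<Rightarrow> complex^'n" where into: "f ` ball 0 1 \<subseteq> ball 0 1"
    and hol: "\<And>i. (\<lambda>s. f s $ i) holomorphic_on ball 0 1" and V: "V = f ` ball 0 1"
    using assms unfolding analytic_disc_attached_def by blast
  then obtain s0 where "s0 \<in> ball 0 1" "p = f s0"
    using \<open>p \<in> V\<close> by blast
  let ?I = "{\<phi> \<in> DA_mult. \<forall>w \<in> V \<inter> ball p \<epsilon>. \<phi> w = 0}"
  have "F \<subseteq> ?I"
    using F unfolding zero_set_def by blast
  then have "zero_set ?I \<subseteq> V"
    using F(2) unfolding zero_set_def by blast
  moreover have "\<forall>w \<in> V. \<phi> w = 0" if "\<phi> \<in> ?I" for \<phi>
  proof -
    have "\<phi> \<in> DA_space" "\<forall>w \<in> f ` ball 0 1 \<inter> ball (f s0) \<epsilon>. \<phi> w = 0"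
      using that DA_mult_subset_DA_space unfolding V \<open>p = f s0\<close> by auto
    then show ?thesis
      unfolding V using DA_space_vanishes_on_image_of_vanishing_near_point[OF _ hol open_ball connected_ball
          into \<open>s0 \<in> ball 0 1\<close> \<open>\<epsilon> > 0\<close>] by blast
  qed
  ultimately show "zero_set ?I = V"
    using into unfolding zero_set_def V by blast
qed

end
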